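(* Let $(G,\varphi)$ be a complex unit gain graph of order $n$ with $r(G,\varphi)=2n-2c(G)-2\alpha(G)$, and let $u$ be a vertex of $G$ lying on a cycle of $G$. Then: (i) $r(G,\varphi)=r(G-u,\varphi)$; (ii) $r(G-u,\varphi)=2(n-1)-2c(G-u)-2\alpha(G-u)$; (iii) $c(G)=c(G-u)+1$; (iv) $\alpha(G)=\alpha(G-u)$; (v) $u$ lies on exactly one cycle of $G$, and $u$ is not a quasi-pendant vertex of $G$.
   Context: A complex unit gain graph $(G,\varphi)$ is a simple finite graph $G$ with a gain function $\varphi$ assigning to each oriented edge $e_{ij}$ a complex number of modulus $1$ with $\varphi(e_{ji})=\overline{\varphi(e_{ij})}$; its adjacency matrix has $(i,j)$-entry $\varphi(e_{ij})$ for adjacent $v_i,v_j$ and $0$ otherwise, and $r(G,\varphi)$ is its rank; induced subgraphs carry the restricted gain. $\alpha$ is the independence number and $c(G)=|E(G)|-|V(G)|+\omega(G)$ the cyclomatic number ($\omega$ = number of components). A pendant vertex is a vertex of degree $1$; a quasi-pendant vertex is a vertex that is adjacent to a pendant vertex and is not itself a pendant vertex. *)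

theory Defs
  imports Complex_Main "Jordan_Normal_Form.DL_Rank"
begin

definition simple_graph :: "'a set \<Rightarrow> ('a \<Rightarrow> 'a \<Rightarrow> bool) \<Rightarrow> bool" where
  "simple_graph V E \<longleftrightarrow> finite V \<and>
     (\<forall>x y. E x y \<longrightarrow> x \<in> V \<and> y \<in> V \<and> x \<noteq> y \<and> E y x)"

definition unit_gain_graph ::
  "'a set \<Rightarrow> ('a \<Rightarrow> 'a \<Rightarrow> bool) \<Rightarrow> ('a \<Rightarrow> 'a \<Rightarrow> complex) \<Rightarrow> bool" where
  "unit_gain_graph V E phi \<longleftrightarrow> simple_graph V E \<and>
     (\<forall>x y. E x y \<longrightarrow> cmod (phi x y) = 1 \<and> phi y x = cnj (phi x y))"

text \<open>Adjacency matrix w.r.t. the increasing enumeration of V (rank does not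
depend on the enumeration).\<close>
definition gain_adj_mat ::
  "'a::linorder set \<Rightarrow> ('a \<Rightarrow> 'a \<Rightarrow> bool) \<Rightarrow> ('a \<Rightarrow> 'a \<Rightarrow> complex) \<Rightarrow> complex mat" where
  "gain_adj_mat V E phi =
     (let vs = sorted_list_of_set V in
      mat (card V) (card V)
        (\<lambda>(i, j). if E (vs ! i) (vs ! j) then phi (vs ! i) (vs ! j) else 0))"

definition gain_rank ::
  "'a::linorder set \<Rightarrow> ('a \<Rightarrow> 'a \<Rightarrow> bool) \<Rightarrow> ('a \<Rightarrow> 'a \<Rightarrow> complex) \<Rightarrow> nat" where
  "gain_rank V E phi = vec_space.rank (card V) (gain_adj_mat V E phi)"

definition del_vert_V :: "'a set \<Rightarrow> 'a \<Rightarrow> 'a set" where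
  "del_vert_V V u = V - {u}"

definition del_vert_E :: "('a \<Rightarrow> 'a \<Rightarrow> bool) \<Rightarrow> 'a \<Rightarrow> 'a \<Rightarrow> 'a \<Rightarrow> bool" where
  "del_vert_E E u = (\<lambda>x y. E x y \<and> x \<noteq> u \<and> y \<noteq> u)"

definition edge_set :: "('a \<Rightarrow> 'a \<Rightarrow> bool) \<Rightarrow> 'a set set" where
  "edge_set E = {{x, y} | x y. E x y}"

definition num_components :: "'a set \<Rightarrow> ('a \<Rightarrow> 'a \<Rightarrow> bool) \<Rightarrow> nat" where
  "num_components V E = card (V // {(x, y). x \<in> V \<and> y \<in> V \<and> E\<^sup>*\<^sup>* x y})"

definition cyclomatic :: "'a set \<Rightarrow> ('a \<Rightarrow> 'a \<Rightarrow> bool) \<Rightarrow> int" where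
  "cyclomatic V E = int (card (edge_set E)) - int (card V) + int (num_components V E)"

definition independent :: "'a set \<Rightarrow> ('a \<Rightarrow> 'a \<Rightarrow> bool) \<Rightarrow> 'a set \<Rightarrow> bool" where
  "independent V E S \<longleftrightarrow> S \<subseteq> V \<and> (\<forall>x\<in>S. \<forall>y\<in>S. \<not> E x y)"

definition independence_number :: "'a set \<Rightarrow> ('a \<Rightarrow> 'a \<Rightarrow> bool) \<Rightarrow> nat" where
  "independence_number V E = Max {card S | S. independent V E S}"

definition is_cycle :: "'a set \<Rightarrow> ('a \<Rightarrow> 'a \<Rightarrow> bool) \<Rightarrow> 'a list \<Rightarrow> bool" where
  "is_cycle V E cs \<longleftrightarrow> length cs \<ge> 3 \<and> distinct cs \<and> set cs \<subseteq> V \<and>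
     (\<forall>i < length cs. E (cs ! i) (cs ! ((i + 1) mod length cs)))"

text \<open>The edge set of a cycle; it identifies the cycle as a subgraph.\<close>
definition cycle_edges :: "'a list \<Rightarrow> 'a set set" where
  "cycle_edges cs = {{cs ! i, cs ! ((i + 1) mod length cs)} | i. i < length cs}"

definition cycles_through :: "'a set \<Rightarrow> ('a \<Rightarrow> 'a \<Rightarrow> bool) \<Rightarrow> 'a \<Rightarrow> 'a set set set" where
  "cycles_through V E u = {cycle_edges cs | cs. is_cycle V E cs \<and> u \<in> set cs}"

definition on_cycle :: "'a set \<Rightarrow> ('a \<Rightarrow> 'a \<Rightarrow> bool) \<Rightarrow> 'a \<Rightarrow> bool" where
  "on_cycle V E u \<longleftrightarrow> (\<exists>cs. is_cycle V E cs \<and> u \<in> set cs)"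

definition degree :: "('a \<Rightarrow> 'a \<Rightarrow> bool) \<Rightarrow> 'a \<Rightarrow> nat" where
  "degree E x = card {y. E x y}"

definition pendant :: "('a \<Rightarrow> 'a \<Rightarrow> bool) \<Rightarrow> 'a \<Rightarrow> bool" where
  "pendant E x \<longleftrightarrow> degree E x = 1"

definition quasi_pendant :: "('a \<Rightarrow> 'a \<Rightarrow> bool) \<Rightarrow> 'a \<Rightarrow> bool" where
  "quasi_pendant E x \<longleftrightarrow> (\<exists>y. E x y \<and> pendant E y) \<and> \<not> pendant E x"

end

theory Submission
  imports Defs
begin

text \<open>The bound r(G) \<ge> 2n - 2c(G) - 2\<alpha>(G) holds for every complex unit gain graph, by induction
  on n: delete a vertex on a cycle (c drops by at least one), an isolated vertex (\<alpha> drops by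
  one), or, in a forest, a pendant vertex together with its neighbour (the rank drops by two).
  For a graph attaining the bound and a vertex u on a cycle,
  r(G) \<ge> r(G - u) \<ge> 2(n - 1) - 2c(G - u) - 2\<alpha>(G - u) \<ge> 2n - 2c(G) - 2\<alpha>(G) = r(G),
  so all these inequalities are equalities; a second cycle through u, or a pendant neighbour of u,
  would make one of them strict.\<close>

lemma simple_graph_sym: "simple_graph V E \<Longrightarrow> E x y \<Longrightarrow> E y x"
  by (auto simp: simple_graph_def)

lemma simple_graph_vertices: "simple_graph V E \<Longrightarrow> E x y \<Longrightarrow> x \<in> V \<and> y \<in> V"
  by (auto simp: simple_graph_def)

lemma simple_graph_irrefl: "simple_graph V E \<Longrightarrow> E x y \<Longrightarrow> x \<noteq> y"
  by (auto simp: simple_graph_def)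

lemma simple_graph_finite: "simple_graph V E \<Longrightarrow> finite V"
  by (auto simp: simple_graph_def)

lemma finite_neighbours: "simple_graph V E \<Longrightarrow> finite {y. E x y}"
  by (rule finite_subset[of _ V]) (auto dest: simple_graph_vertices simple_graph_finite)

lemma simple_graph_del_vert:
  "simple_graph V E \<Longrightarrow> simple_graph (del_vert_V V u) (del_vert_E E u)"
  by (auto simp: simple_graph_def del_vert_V_def del_vert_E_def)

lemma unit_gain_graph_simple: "unit_gain_graph V E phi \<Longrightarrow> simple_graph V E"
  by (simp add: unit_gain_graph_def)

lemma unit_gain_graph_del_vert:
  "unit_gain_graph V E phi \<Longrightarrow> unit_gain_graph (del_vert_V V u) (del_vert_E E u) phi"
  unfolding unit_gain_graph_def using simple_graph_del_vert by (auto simp: del_vert_E_def)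

lemma unit_gain_graph_gain_nonzero: "unit_gain_graph V E phi \<Longrightarrow> E x y \<Longrightarrow> phi x y \<noteq> 0"
  by (metis unit_gain_graph_def norm_zero zero_neq_one)

lemma card_del_vert_V: "finite V \<Longrightarrow> x \<in> V \<Longrightarrow> int (card (del_vert_V V x)) = int (card V) - 1"
  using card_gt_0_iff[of V] by (auto simp: del_vert_V_def of_nat_diff)

lemma card_del_vert_del_vert:
  assumes "finite V" "v \<in> V" "w \<in> V" "v \<noteq> w"
  shows "int (card (del_vert_V (del_vert_V V w) v)) = int (card V) - 2"
  using assms card_del_vert_V[of V w] card_del_vert_V[of "del_vert_V V w" v]
  by (simp add: del_vert_V_def)

lemma pendant_iff_singleton_neighbours: "pendant E v \<longleftrightarrow> (\<exists>w. {y. E v y} = {w})"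
  unfolding pendant_def degree_def by (simp add: card_1_singleton_iff)

section \<open>Rank of the gain adjacency matrix\<close>

definition cols_indep :: "'a::field mat \<Rightarrow> nat set \<Rightarrow> bool" where
  "cols_indep A J \<longleftrightarrow> (\<forall>a. (\<forall>i<dim_row A. (\<Sum>j\<in>J. a j * A $$ (i, j)) = 0) \<longrightarrow> (\<forall>j\<in>J. a j = 0))"

lemma card_le_rank_if_cols_indep:
  fixes A :: "'a::field mat"
  assumes A: "A \<in> carrier_mat n nc" and J: "J \<subseteq> {..<nc}" and ind: "cols_indep A J"
  shows "card J \<le> vec_space.rank n A"
proof -
  interpret vec_space "TYPE('a)" n .
  have comb_zero: "\<forall>j\<in>J. a j = 0" if "\<forall>i<n. (\<Sum>j\<in>J. a j * A $$ (i, j)) = 0" for a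
    using ind that A by (simp add: cols_indep_def)
  have finJ: "finite J" using J finite_subset by blast
  have inj_col: "inj_on (col A) J"
  proof (rule inj_onI, rule ccontr)
    fix j1 j2 assume j: "j1 \<in> J" "j2 \<in> J" "col A j1 = col A j2" "j1 \<noteq> j2"
    define a :: "nat \<Rightarrow> 'a" where "a j = (if j = j1 then 1 else if j = j2 then -1 else 0)" for j
    have "(\<Sum>j\<in>J. a j * A $$ (i, j)) = 0" if "i < n" for i
    proof -
      have "(\<Sum>j\<in>J. a j * A $$ (i, j)) = (\<Sum>j\<in>{j1, j2}. a j * A $$ (i, j))"
        by (rule sum.mono_neutral_right) (use j finJ in \<open>auto simp: a_def\<close>)
      also have "\<dots> = col A j1 $ i - col A j2 $ i"
        using j(1,2,4) J A \<open>i < n\<close> by (auto simp: a_def subset_iff)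
      finally show ?thesis using j(3) by simp
    qed
    then have "a j1 = 0" using comb_zero j(1) by blast
    then show False by (simp add: a_def)
  qed
  have cols: "col A ` J \<subseteq> set (cols A)" "col A ` J \<subseteq> carrier_vec n"
    using A J by (auto simp: cols_def)
  have "lin_indpt (col A ` J)"
  proof
    assume "lin_dep (col A ` J)"
    then obtain a w where a: "lincomb a (col A ` J) = 0\<^sub>v n" "w \<in> col A ` J" "a w \<noteq> 0"
      using finite_lin_dep[OF _ _ cols(2)] finJ by auto
    have "(\<Sum>j\<in>J. a (col A j) * A $$ (i, j)) = 0" if "i < n" for i
    proof -
      have "(\<Sum>j\<in>J. a (col A j) * A $$ (i, j)) = (\<Sum>v\<in>col A ` J. a v * v $ i)"
        unfolding sum.reindex[OF inj_col] comp_def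
        by (rule sum.cong) (use A J \<open>i < n\<close> in auto)
      also have "\<dots> = lincomb a (col A ` J) $ i" using lincomb_index[OF \<open>i < n\<close> cols(2)] by simp
      also have "\<dots> = 0" using a(1) \<open>i < n\<close> by simp
      finally show ?thesis .
    qed
    then have "\<forall>j\<in>J. a (col A j) = 0" using comb_zero[of "\<lambda>j. a (col A j)"] by blast
    then show False using a(2,3) by auto
  qed
  then have "card (col A ` J) \<le> rank A" using rank_ge_card_indpt[OF A cols(1)] by blast
  then show ?thesis using card_image[OF inj_col] by simp
qed

lemma cols_indep_rank_witness:
  fixes A :: "'a::field mat"
  assumes A: "A \<in> carrier_mat n nc"
  shows "\<exists>J \<subseteq> {..<nc}. cols_indep A J \<and> card J = vec_space.rank n A"
proof -
  interpret vec_space "TYPE('a)" n .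
  obtain S where S: "maximal S (\<lambda>U. U \<subseteq> set (cols A) \<and> lin_indpt U)"
    using maximal_exists[of "\<lambda>U. U \<subseteq> set (cols A) \<and> lin_indpt U" "card (set (cols A))" "{}"]
    by (meson List.finite_set card_mono empty_iff empty_subsetI finite_lin_indpt2 rev_finite_subset)
  have S_cols: "S \<subseteq> set (cols A)" and S_indpt: "lin_indpt S" using S by (auto simp: maximal_def)
  have finS: "finite S" using S_cols finite_subset by blast
  have S_car: "S \<subseteq> carrier_vec n" using S_cols A by (auto simp: cols_def)
  have "\<forall>s\<in>S. \<exists>j. j < nc \<and> col A j = s" using S_cols A by (force simp: cols_def)
  then obtain jf where jf: "\<And>s. s \<in> S \<Longrightarrow> jf s < nc \<and> col A (jf s) = s" by metis
  have inj: "inj_on jf S" by (rule inj_onI) (metis jf)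
  have "cols_indep A (jf ` S)"
    unfolding cols_indep_def
  proof (intro allI impI)
    fix a assume a: "\<forall>i<dim_row A. (\<Sum>j\<in>jf ` S. a j * A $$ (i, j)) = 0"
    have "lincomb (a \<circ> jf) S = 0\<^sub>v n"
    proof (rule eq_vecI)
      show "dim_vec (lincomb (a \<circ> jf) S) = dim_vec (0\<^sub>v n)" using lincomb_dim[OF finS S_car] by simp
      fix i assume "i < dim_vec (0\<^sub>v n)"
      then have i: "i < n" by simp
      have "lincomb (a \<circ> jf) S $ i = (\<Sum>s\<in>S. a (jf s) * s $ i)"
        using lincomb_index[OF i S_car] by simp
      also have "\<dots> = (\<Sum>s\<in>S. a (jf s) * A $$ (i, jf s))"
        by (rule sum.cong[OF refl]) (use jf i A in \<open>metis carrier_matD index_col\<close>)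
      also have "\<dots> = (\<Sum>j\<in>jf ` S. a j * A $$ (i, j))" by (simp add: sum.reindex[OF inj])
      also have "\<dots> = 0" using a i A by simp
      finally show "lincomb (a \<circ> jf) S $ i = 0\<^sub>v n $ i" using i by simp
    qed
    then have "a \<circ> jf \<in> S \<rightarrow> {0}" using not_lindepD[OF S_indpt finS subset_refl] by simp
    then show "\<forall>j\<in>jf ` S. a j = 0" by auto
  qed
  moreover have "jf ` S \<subseteq> {..<nc}" using jf by auto
  moreover have "card (jf ` S) = rank A" using card_image[OF inj] rank_card_indpt[OF A S] by simp
  ultimately show ?thesis by blast
qed

definition gain_adj :: "('a \<Rightarrow> 'a \<Rightarrow> bool) \<Rightarrow> ('a \<Rightarrow> 'a \<Rightarrow> complex) \<Rightarrow> 'a \<Rightarrow> 'a \<Rightarrow> complex" where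
  "gain_adj E phi x y = (if E x y then phi x y else 0)"

text \<open>The vertex-indexed form of cols_indep for gain_adj_mat, so that the enumeration of V inside
  gain_adj_mat never appears.\<close>
definition indep_columns ::
  "'a set \<Rightarrow> ('a \<Rightarrow> 'a \<Rightarrow> bool) \<Rightarrow> ('a \<Rightarrow> 'a \<Rightarrow> complex) \<Rightarrow> 'a set \<Rightarrow> bool" where
  "indep_columns V E phi T \<longleftrightarrow> T \<subseteq> V \<and>
     (\<forall>c. (\<forall>x\<in>V. (\<Sum>y\<in>T. gain_adj E phi x y * c y) = 0) \<longrightarrow> (\<forall>y\<in>T. c y = 0))"

lemma gain_adj_mat_carrier: "gain_adj_mat V E phi \<in> carrier_mat (card V) (card V)"
  by (simp add: gain_adj_mat_def Let_def)

lemma gain_adj_mat_index: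
  "i < card V \<Longrightarrow> j < card V \<Longrightarrow> gain_adj_mat V E phi $$ (i, j) =
     gain_adj E phi (sorted_list_of_set V ! i) (sorted_list_of_set V ! j)"
  by (simp add: gain_adj_mat_def Let_def gain_adj_def)

lemma indep_columns_iff_cols_indep:
  fixes V :: "'a::linorder set"
  assumes finV: "finite V" and J: "J \<subseteq> {..<card V}"
  defines "vs \<equiv> sorted_list_of_set V"
  shows "indep_columns V E phi (nth vs ` J) \<longleftrightarrow> cols_indep (gain_adj_mat V E phi) J"
proof -
  define A where "A = gain_adj_mat V E phi"
  have vs: "distinct vs" "length vs = card V" "set vs = V" using finV by (auto simp: vs_def)
  have J': "\<forall>j\<in>J. j < length vs" using J vs(2) by auto
  then have injJ: "inj_on (nth vs) J" using vs(1) by (auto simp: inj_on_def nth_eq_iff_index_eq)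
  have row: "(\<Sum>y\<in>nth vs ` J. gain_adj E phi (vs ! i) y * c y) = (\<Sum>j\<in>J. c (vs ! j) * A $$ (i, j))"
    if "i < card V" for i c
    unfolding sum.reindex[OF injJ] comp_def
    by (rule sum.cong) (use that J in \<open>auto simp: A_def vs_def gain_adj_mat_index mult.commute\<close>)
  have V: "\<exists>i < card V. x = vs ! i" if "x \<in> V" for x using that vs by (metis in_set_conv_nth)
  have dim: "dim_row A = card V" by (simp add: A_def gain_adj_mat_def Let_def)
  show ?thesis
    unfolding A_def[symmetric]
  proof
    assume ind: "indep_columns V E phi (nth vs ` J)"
    show "cols_indep A J"
      unfolding cols_indep_def dim
    proof (intro allI impI)
      fix a assume a: "\<forall>i<card V. (\<Sum>j\<in>J. a j * A $$ (i, j)) = 0"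
      define c where "c = a \<circ> the_inv_into J (nth vs)"
      have c: "c (vs ! j) = a j" if "j \<in> J" for j
        using the_inv_into_f_f[OF injJ that] by (simp add: c_def)
      have "(\<Sum>y\<in>nth vs ` J. gain_adj E phi x y * c y) = 0" if "x \<in> V" for x
        using V[OF that] row a c by (auto cong: sum.cong)
      then have "\<forall>y\<in>nth vs ` J. c y = 0" using ind by (simp add: indep_columns_def)
      then show "\<forall>j\<in>J. a j = 0" using c by auto
    qed
  next
    assume ind: "cols_indep A J"
    show "indep_columns V E phi (nth vs ` J)"
      unfolding indep_columns_def
    proof (intro conjI allI impI)
      show "nth vs ` J \<subseteq> V" using J vs by auto
      fix c assume c: "\<forall>x\<in>V. (\<Sum>y\<in>nth vs ` J. gain_adj E phi x y * c y) = 0"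
      have "(\<Sum>j\<in>J. c (vs ! j) * A $$ (i, j)) = 0" if i: "i < card V" for i
      proof -
        have "vs ! i \<in> V" using i vs by auto
        then have "(\<Sum>y\<in>nth vs ` J. gain_adj E phi (vs ! i) y * c y) = 0" using c by blast
        then show ?thesis using row[OF i] by simp
      qed
      then have "\<forall>j\<in>J. c (vs ! j) = 0"
        using ind unfolding cols_indep_def dim by (elim allE[of _ "\<lambda>j. c (vs ! j)"]) blast
      then show "\<forall>y\<in>nth vs ` J. c y = 0" by blast
    qed
  qed
qed

lemma card_le_gain_rank:
  fixes V :: "'a::linorder set"
  assumes finV: "finite V" and ind: "indep_columns V E phi T"
  shows "card T \<le> gain_rank V E phi"
proof -
  define vs where "vs = sorted_list_of_set V"
  define J where "J = {j. j < card V \<and> vs ! j \<in> T}"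
  have vs: "distinct vs" "length vs = card V" "set vs = V" using finV by (auto simp: vs_def)
  have J: "J \<subseteq> {..<card V}" by (auto simp: J_def)
  have T: "T = nth vs ` J"
  proof
    show "T \<subseteq> nth vs ` J"
    proof
      fix y assume "y \<in> T"
      then have "y \<in> set vs" using ind vs(3) by (auto simp: indep_columns_def)
      then obtain j where "j < card V" "y = vs ! j" using vs(2) by (auto simp: in_set_conv_nth)
      then show "y \<in> nth vs ` J" using \<open>y \<in> T\<close> by (auto simp: J_def)
    qed
  qed (auto simp: J_def)
  have "inj_on (nth vs) J" using vs(1,2) by (auto simp: J_def inj_on_def nth_eq_iff_index_eq)
  then have "card T = card J" using T card_image by blast
  also have "\<dots> \<le> gain_rank V E phi"
    using card_le_rank_if_cols_indep[OF gain_adj_mat_carrier J]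
      indep_columns_iff_cols_indep[OF finV J] ind T
    by (simp add: gain_rank_def vs_def)
  finally show ?thesis .
qed

lemma gain_rank_witness:
  fixes V :: "'a::linorder set"
  assumes finV: "finite V"
  obtains T where "indep_columns V E phi T" "card T = gain_rank V E phi"
proof -
  define vs where "vs = sorted_list_of_set V"
  obtain J where J: "J \<subseteq> {..<card V}" "cols_indep (gain_adj_mat V E phi) J"
    "card J = gain_rank V E phi"
    using cols_indep_rank_witness[OF gain_adj_mat_carrier[of V E phi]] unfolding gain_rank_def
    by blast
  have "\<forall>j\<in>J. j < length vs" using J(1) finV by (auto simp: vs_def)
  then have "inj_on (nth vs) J" using finV by (auto simp: inj_on_def nth_eq_iff_index_eq vs_def)
  then have "card (nth vs ` J) = gain_rank V E phi" using J(3) card_image by metis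
  moreover have "indep_columns V E phi (nth vs ` J)"
    using indep_columns_iff_cols_indep[OF finV J(1)] J(2) by (simp add: vs_def)
  ultimately show thesis using that by blast
qed

lemma indep_columns_del_vert_E:
  assumes u: "u \<notin> W" and T: "indep_columns W (del_vert_E E u) phi T"
  shows "indep_columns W E phi T"
  unfolding indep_columns_def
proof (intro conjI allI impI)
  show TW: "T \<subseteq> W" using T by (simp add: indep_columns_def)
  fix c assume c: "\<forall>x\<in>W. (\<Sum>y\<in>T. gain_adj E phi x y * c y) = 0"
  have "(\<Sum>y\<in>T. gain_adj (del_vert_E E u) phi x y * c y) = 0" if x: "x \<in> W" for x
  proof -
    have "(\<Sum>y\<in>T. gain_adj (del_vert_E E u) phi x y * c y) = (\<Sum>y\<in>T. gain_adj E phi x y * c y)"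
      by (rule sum.cong) (use u x TW in \<open>auto simp: gain_adj_def del_vert_E_def\<close>)
    then show ?thesis using c x by simp
  qed
  then show "\<forall>y\<in>T. c y = 0" using T by (simp add: indep_columns_def)
qed

lemma indep_columns_mono_rows: "W \<subseteq> V \<Longrightarrow> indep_columns W E phi T \<Longrightarrow> indep_columns V E phi T"
  unfolding indep_columns_def by blast

lemma gain_rank_del_vert_le:
  fixes V :: "'a::linorder set"
  assumes finV: "finite V"
  shows "gain_rank (del_vert_V V u) (del_vert_E E u) phi \<le> gain_rank V E phi"
proof -
  obtain T where T: "indep_columns (del_vert_V V u) (del_vert_E E u) phi T"
    "card T = gain_rank (del_vert_V V u) (del_vert_E E u) phi"
    using gain_rank_witness[of "del_vert_V V u"] finV by (auto simp: del_vert_V_def)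
  have "indep_columns (del_vert_V V u) E phi T"
    by (rule indep_columns_del_vert_E[OF _ T(1)]) (simp add: del_vert_V_def)
  then have "indep_columns V E phi T" by (rule indep_columns_mono_rows[rotated]) (auto simp: del_vert_V_def)
  then have "card T \<le> gain_rank V E phi" by (rule card_le_gain_rank[OF finV])
  then show ?thesis using T(2) by simp
qed

text \<open>Row v forces the coefficient of w to vanish, the remaining rows (other than w) then see only
  the independent columns of the smaller graph, and finally row w forces the coefficient of v to
  vanish.\<close>
lemma gain_rank_del_pendant:
  fixes V :: "'a::linorder set"
  assumes G: "unit_gain_graph V E phi" and nbhd: "{y. E v y} = {w}"
  shows "gain_rank (del_vert_V (del_vert_V V w) v) (del_vert_E (del_vert_E E w) v) phi + 2
    \<le> gain_rank V E phi"
proof -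
  let ?V = "del_vert_V (del_vert_V V w) v" and ?E = "del_vert_E (del_vert_E E w) v"
  have sg: "simple_graph V E" using G by (rule unit_gain_graph_simple)
  have finV: "finite V" using sg by (rule simple_graph_finite)
  have Evw: "E v w" and only: "\<And>y. E v y \<longleftrightarrow> y = w" using nbhd by auto
  have Ewv: "E w v" using simple_graph_sym[OF sg Evw] .
  have vw: "v \<in> V" "w \<in> V" "v \<noteq> w"
    using simple_graph_vertices[OF sg Evw] simple_graph_irrefl[OF sg Evw] by auto
  have not_Exv: "\<not> E x v" if "x \<noteq> w" for x using only simple_graph_sym[OF sg] that by blast
  obtain T where T: "indep_columns ?V ?E phi T" "card T = gain_rank ?V ?E phi"
    using gain_rank_witness[of ?V] finV by (auto simp: del_vert_V_def)
  have TV: "T \<subseteq> V - {v, w}" using T(1) by (auto simp: indep_columns_def del_vert_V_def)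
  have "indep_columns ?V (del_vert_E E w) phi T"
    by (rule indep_columns_del_vert_E[OF _ T(1)]) (simp add: del_vert_V_def)
  then have T_G: "indep_columns ?V E phi T"
    by (rule indep_columns_del_vert_E[rotated]) (simp add: del_vert_V_def)
  have finT: "finite T" using TV finV finite_subset by blast
  define T' where "T' = insert v (insert w T)"
  have vw_T: "v \<notin> insert w T" "w \<notin> T" using TV vw by auto
  have split: "(\<Sum>y\<in>T'. f y) = f v + f w + (\<Sum>y\<in>T. f y)" for f :: "'a \<Rightarrow> complex"
    using finT vw_T by (simp add: T'_def add.assoc)
  have "indep_columns V E phi T'"
    unfolding indep_columns_def
  proof (intro conjI allI impI)
    show "T' \<subseteq> V" using TV vw by (auto simp: T'_def)
    fix c assume c: "\<forall>x\<in>V. (\<Sum>y\<in>T'. gain_adj E phi x y * c y) = 0"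
    have "(\<Sum>y\<in>T. gain_adj E phi v y * c y) = 0"
      by (rule sum.neutral) (use TV only in \<open>auto simp: gain_adj_def\<close>)
    then have "phi v w * c w = 0"
      using c[rule_format, OF vw(1)] vw(3) split[of "\<lambda>y. gain_adj E phi v y * c y"]
      by (simp add: gain_adj_def only)
    then have cw: "c w = 0" using unit_gain_graph_gain_nonzero[OF G Evw] by simp
    have "(\<Sum>y\<in>T. gain_adj E phi x y * c y) = 0" if x: "x \<in> ?V" for x
    proof -
      have "(\<Sum>y\<in>T. gain_adj E phi x y * c y) = (\<Sum>y\<in>T'. gain_adj E phi x y * c y)"
        using x not_Exv[of x] cw split[of "\<lambda>y. gain_adj E phi x y * c y"]
        by (simp add: gain_adj_def del_vert_V_def)
      also have "\<dots> = 0" using c x by (simp add: del_vert_V_def)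
      finally show ?thesis .
    qed
    then have cT: "\<forall>y\<in>T. c y = 0" using T_G by (simp add: indep_columns_def)
    then have "phi w v * c v = 0"
      using c[rule_format, OF vw(2)] cw cT Ewv simple_graph_irrefl[OF sg]
        split[of "\<lambda>y. gain_adj E phi w y * c y"]
      by (simp add: gain_adj_def)
    then have "c v = 0" using unit_gain_graph_gain_nonzero[OF G Ewv] by simp
    then show "\<forall>y\<in>T'. c y = 0" using cw cT by (simp add: T'_def)
  qed
  then have "card T' \<le> gain_rank V E phi" by (rule card_le_gain_rank[OF finV])
  then show ?thesis using T(2) finT vw_T by (simp add: T'_def)
qed

section \<open>Components and the cyclomatic number\<close>

lemma simple_graph_symp: "simple_graph V E \<Longrightarrow> symp E"
  by (auto intro: sympI simple_graph_sym)

lemma symp_del_vert_E: "symp E \<Longrightarrow> symp (del_vert_E E x)"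
  by (auto simp: symp_def del_vert_E_def)

definition conn_rel :: "'a set \<Rightarrow> ('a \<Rightarrow> 'a \<Rightarrow> bool) \<Rightarrow> ('a \<times> 'a) set" where
  "conn_rel V E = {(x, y). x \<in> V \<and> y \<in> V \<and> E\<^sup>*\<^sup>* x y}"

lemma num_components_conn_rel: "num_components V E = card (V // conn_rel V E)"
  by (simp add: num_components_def conn_rel_def)

lemma conn_rel_class_eq:
  assumes "symp E" "E\<^sup>*\<^sup>* a b" "a \<in> V" "b \<in> V"
  shows "conn_rel V E `` {a} = conn_rel V E `` {b}"
proof -
  have "E\<^sup>*\<^sup>* b a" using sympD[OF symp_rtranclp[OF assms(1)] assms(2)] .
  then show ?thesis using assms(2-4) by (auto simp: conn_rel_def intro: rtranclp_trans)
qed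

lemma rtranclp_del_vert_E_avoids:
  "(del_vert_E E x)\<^sup>*\<^sup>* z y \<Longrightarrow> z \<noteq> x \<Longrightarrow> y \<noteq> x"
  by (induction rule: rtranclp_induct) (auto simp: del_vert_E_def)

lemma rtranclp_del_vert_E_le: "(del_vert_E E x)\<^sup>*\<^sup>* z y \<Longrightarrow> E\<^sup>*\<^sup>* z y"
  by (rule rtranclp_mono[THEN predicate2D, rotated]) (auto simp: del_vert_E_def)

lemma rtranclp_del_vert_E_if_unreachable:
  assumes "E\<^sup>*\<^sup>* z y" "\<not> E\<^sup>*\<^sup>* z x"
  shows "(del_vert_E E x)\<^sup>*\<^sup>* z y"
  using assms
proof (induction rule: rtranclp_induct)
  case (step a b)
  then have "del_vert_E E x a b" by (auto simp: del_vert_E_def intro: rtranclp.rtrancl_into_rtrancl)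
  with step show ?case by (meson rtranclp.rtrancl_into_rtrancl)
qed simp

lemma rtranclp_del_vert_E_cases:
  assumes "symp E" "E\<^sup>*\<^sup>* z y" "z \<noteq> x"
  shows "(del_vert_E E x)\<^sup>*\<^sup>* z y \<or> (\<exists>y'. E x y' \<and> (del_vert_E E x)\<^sup>*\<^sup>* z y')"
  using assms(2,3)
proof (induction rule: rtranclp_induct)
  case (step a b)
  show ?case
  proof (cases "\<exists>y'. E x y' \<and> (del_vert_E E x)\<^sup>*\<^sup>* z y'")
    case False
    then have za: "(del_vert_E E x)\<^sup>*\<^sup>* z a" using step by blast
    then have "a \<noteq> x" using rtranclp_del_vert_E_avoids step.prems by metis
    show ?thesis
    proof (cases "b = x")
      case True
      then have "E x a" using step.hyps(2) assms(1) by (simp add: symp_def)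
      then show ?thesis using za by blast
    next
      case False
      then have "del_vert_E E x a b" using \<open>a \<noteq> x\<close> step.hyps(2) by (simp add: del_vert_E_def)
      then show ?thesis using za by (meson rtranclp.rtrancl_into_rtrancl)
    qed
  qed blast
qed simp

lemma conn_rel_del_vert_class_unreachable:
  assumes z: "z \<in> del_vert_V V x" and unreach: "\<not> E\<^sup>*\<^sup>* z x"
  shows "conn_rel (del_vert_V V x) (del_vert_E E x) `` {z} = conn_rel V E `` {z}"
proof (intro equalityI subsetI)
  fix y assume "y \<in> conn_rel (del_vert_V V x) (del_vert_E E x) `` {z}"
  then have "y \<in> del_vert_V V x" "(del_vert_E E x)\<^sup>*\<^sup>* z y" by (auto simp: conn_rel_def)
  then show "y \<in> conn_rel V E `` {z}"
    using z rtranclp_del_vert_E_le[of E x z y] by (auto simp: conn_rel_def del_vert_V_def)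
next
  fix y assume "y \<in> conn_rel V E `` {z}"
  then have y: "y \<in> V" "E\<^sup>*\<^sup>* z y" by (auto simp: conn_rel_def)
  then have "y \<noteq> x" using unreach by blast
  then show "y \<in> conn_rel (del_vert_V V x) (del_vert_E E x) `` {z}"
    using z y rtranclp_del_vert_E_if_unreachable[OF y(2) unreach]
    by (auto simp: conn_rel_def del_vert_V_def)
qed

lemma conn_rel_del_vert_class_reachable:
  assumes sg: "simple_graph V E" and z: "z \<in> del_vert_V V x" and reach: "E\<^sup>*\<^sup>* z x"
  obtains y where "E x y"
    "conn_rel (del_vert_V V x) (del_vert_E E x) `` {z} = conn_rel (del_vert_V V x) (del_vert_E E x) `` {y}"
proof -
  have symp: "symp E" using sg by (rule simple_graph_symp)
  have zx: "z \<noteq> x" using z by (simp add: del_vert_V_def)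
  then have "\<not> (del_vert_E E x)\<^sup>*\<^sup>* z x" using rtranclp_del_vert_E_avoids[of E x z x] by blast
  then obtain y where y: "E x y" "(del_vert_E E x)\<^sup>*\<^sup>* z y"
    using rtranclp_del_vert_E_cases[OF symp reach zx] by blast
  have "y \<in> del_vert_V V x"
    using simple_graph_vertices[OF sg y(1)] simple_graph_irrefl[OF sg y(1)]
    by (simp add: del_vert_V_def)
  then have "conn_rel (del_vert_V V x) (del_vert_E E x) `` {z}
      = conn_rel (del_vert_V V x) (del_vert_E E x) `` {y}"
    using conn_rel_class_eq[OF symp_del_vert_E[OF symp] y(2) z] by blast
  with y(1) show thesis by (rule that)
qed

lemma num_components_del_vert_le:
  assumes sg: "simple_graph V E" and xV: "x \<in> V"
  defines "f \<equiv> \<lambda>y. conn_rel (del_vert_V V x) (del_vert_E E x) `` {y}"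
  shows "num_components (del_vert_V V x) (del_vert_E E x) + 1
    \<le> num_components V E + card (f ` {y. E x y})"
proof -
  let ?V = "del_vert_V V x" and ?E = "del_vert_E E x"
  let ?R = "conn_rel V E" and ?R' = "conn_rel ?V ?E"
  have finV: "finite V" using sg by (rule simple_graph_finite)
  have sub: "?V // ?R' \<subseteq> (V // ?R - {?R `` {x}}) \<union> f ` {y. E x y}"
  proof
    fix K assume "K \<in> ?V // ?R'"
    then obtain z where z: "z \<in> ?V" "K = ?R' `` {z}" unfolding quotient_def by blast
    show "K \<in> (V // ?R - {?R `` {x}}) \<union> f ` {y. E x y}"
    proof (cases "E\<^sup>*\<^sup>* z x")
      case True
      then obtain y where "E x y" "K = f y"
        using conn_rel_del_vert_class_reachable[OF sg z(1)] z(2) unfolding f_def by metis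
      then show ?thesis by blast
    next
      case False
      then have "K = ?R `` {z}" using conn_rel_del_vert_class_unreachable[OF z(1)] z(2) by simp
      moreover have "?R `` {z} \<in> V // ?R" using z(1) by (auto simp: del_vert_V_def intro: quotientI)
      moreover have "x \<notin> ?R `` {z}" "x \<in> ?R `` {x}" using False xV by (auto simp: conn_rel_def)
      ultimately show ?thesis by blast
    qed
  qed
  have finQ: "finite (V // ?R)" by (rule finite_quotient[OF finV]) (auto simp: conn_rel_def)
  have xQ: "?R `` {x} \<in> V // ?R" using xV by (auto simp: quotient_def)
  have "card (?V // ?R') \<le> card ((V // ?R - {?R `` {x}}) \<union> f ` {y. E x y})"
    by (rule card_mono[OF _ sub]) (use finQ finite_neighbours[OF sg] in auto)
  also have "\<dots> \<le> card (V // ?R - {?R `` {x}}) + card (f ` {y. E x y})" by (rule card_Un_le)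
  also have "card (V // ?R - {?R `` {x}}) = card (V // ?R) - 1" using xQ finQ by simp
  finally show ?thesis
    using xQ finQ card_gt_0_iff[of "V // ?R"] by (auto simp: num_components_conn_rel)
qed

lemma card_edge_set_del_vert:
  assumes sg: "simple_graph V E"
  shows "card (edge_set E) = card (edge_set (del_vert_E E x)) + degree E x"
proof -
  let ?X = "(\<lambda>y. {x, y}) ` {y. E x y}"
  have eq: "edge_set E = edge_set (del_vert_E E x) \<union> ?X"
  proof (intro equalityI subsetI)
    fix e assume "e \<in> edge_set E"
    then obtain a b where e: "e = {a, b}" "E a b" by (auto simp: edge_set_def)
    consider "a = x" | "b = x" | "a \<noteq> x" "b \<noteq> x" by blast
    then show "e \<in> edge_set (del_vert_E E x) \<union> ?X"
    proof cases
      case 1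
      then show ?thesis using e by blast
    next
      case 2
      then have "E x a" "e = {x, a}" using e simple_graph_sym[OF sg] by auto
      then show ?thesis by blast
    next
      case 3
      then have "del_vert_E E x a b" using e by (simp add: del_vert_E_def)
      then show ?thesis unfolding edge_set_def using e by blast
    qed
  next
    fix e assume "e \<in> edge_set (del_vert_E E x) \<union> ?X"
    then show "e \<in> edge_set E" unfolding edge_set_def del_vert_E_def by blast
  qed
  have "x \<notin> e" if "e \<in> edge_set (del_vert_E E x)" for e
    using that by (auto simp: edge_set_def del_vert_E_def)
  then have disj: "edge_set (del_vert_E E x) \<inter> ?X = {}" by blast
  have "edge_set E \<subseteq> Pow V" using simple_graph_vertices[OF sg] by (auto simp: edge_set_def)
  then have fin: "finite (edge_set E)"
    using finite_subset simple_graph_finite[OF sg] by blast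
  have inj: "inj_on (\<lambda>y. {x, y}) {y. E x y}"
    using simple_graph_irrefl[OF sg] by (auto simp: inj_on_def doubleton_eq_iff)
  have "card ?X = degree E x" unfolding degree_def using card_image[OF inj] .
  then show ?thesis using card_Un_disjoint[of "edge_set (del_vert_E E x)" ?X] fin disj
    unfolding eq by simp
qed

lemma cyclomatic_del_vert_le:
  assumes sg: "simple_graph V E" and xV: "x \<in> V"
  defines "f \<equiv> \<lambda>y. conn_rel (del_vert_V V x) (del_vert_E E x) `` {y}"
  shows "cyclomatic (del_vert_V V x) (del_vert_E E x) + int (degree E x)
    \<le> cyclomatic V E + int (card (f ` {y. E x y}))"
  using num_components_del_vert_le[OF sg xV] card_edge_set_del_vert[OF sg, of x]
    card_del_vert_V[OF simple_graph_finite[OF sg] xV]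
  unfolding cyclomatic_def f_def by linarith

lemma card_image_plus_le:
  assumes "finite N" "D \<subseteq> N" "f ` D \<subseteq> f ` (N - D)"
  shows "card (f ` N) + card D \<le> card N"
proof -
  have "f ` N = f ` (N - D)" using assms(2,3) by blast
  then have "card (f ` N) \<le> card (N - D)" using card_image_le[of "N - D" f] assms(1) by simp
  moreover have "card (N - D) = card N - card D"
    using card_Diff_subset[OF finite_subset[OF assms(2,1)] assms(2)] .
  moreover have "card D \<le> card N" using card_mono[OF assms(1,2)] .
  ultimately show ?thesis by linarith
qed

lemma cyclomatic_del_vert_mono:
  assumes "simple_graph V E" "x \<in> V"
  shows "cyclomatic (del_vert_V V x) (del_vert_E E x) \<le> cyclomatic V E"
  using cyclomatic_del_vert_le[OF assms]
    card_image_le[OF finite_neighbours[OF assms(1)], of "\<lambda>y. conn_rel (del_vert_V V x) (del_vert_E E x) `` {y}" x]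
  by (simp add: degree_def)

lemma conn_rel_del_vert_nbrs_eq:
  assumes sg: "simple_graph V E" and "E x a" "E x b" "(del_vert_E E x)\<^sup>*\<^sup>* a b"
  shows "conn_rel (del_vert_V V x) (del_vert_E E x) `` {a}
    = conn_rel (del_vert_V V x) (del_vert_E E x) `` {b}"
proof (rule conn_rel_class_eq)
  show "symp (del_vert_E E x)" using sg by (intro symp_del_vert_E simple_graph_symp)
  show "a \<in> del_vert_V V x" "b \<in> del_vert_V V x"
    using assms(2,3) simple_graph_vertices[OF sg] simple_graph_irrefl[OF sg]
    by (auto simp: del_vert_V_def)
qed (rule assms(4))

lemma cyclomatic_del_vert_merged_nbrs:
  assumes sg: "simple_graph V E" and xV: "x \<in> V"
  defines "f \<equiv> \<lambda>y. conn_rel (del_vert_V V x) (del_vert_E E x) `` {y}"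
  assumes D: "D \<subseteq> {y. E x y}" "f ` D \<subseteq> f ` ({y. E x y} - D)"
  shows "cyclomatic (del_vert_V V x) (del_vert_E E x) \<le> cyclomatic V E - int (card D)"
  using cyclomatic_del_vert_le[OF sg xV] card_image_plus_le[OF finite_neighbours[OF sg] D]
  unfolding f_def degree_def by linarith

lemma cyclomatic_del_vert_connected_nbrs:
  assumes sg: "simple_graph V E" and xV: "x \<in> V"
    and ab: "E x a" "E x b" "a \<noteq> b" "(del_vert_E E x)\<^sup>*\<^sup>* a b"
  shows "cyclomatic (del_vert_V V x) (del_vert_E E x) \<le> cyclomatic V E - 1"
  using cyclomatic_del_vert_merged_nbrs[OF sg xV, of "{b}"] conn_rel_del_vert_nbrs_eq[OF sg ab(1,2,4)] ab
  by auto

lemma cyclomatic_del_vert_two_connected_pairs: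
  assumes sg: "simple_graph V E" and xV: "x \<in> V"
    and ab: "E x a" "E x b" "a \<noteq> b" "(del_vert_E E x)\<^sup>*\<^sup>* a b"
    and ab': "E x a'" "E x b'" "a' \<noteq> b'" "(del_vert_E E x)\<^sup>*\<^sup>* a' b'"
    and ne: "{a, b} \<noteq> {a', b'}"
  shows "cyclomatic (del_vert_V V x) (del_vert_E E x) \<le> cyclomatic V E - 2"
proof -
  let ?f = "\<lambda>y. conn_rel (del_vert_V V x) (del_vert_E E x) `` {y}"
  have fab: "?f a = ?f b" using conn_rel_del_vert_nbrs_eq[OF sg ab(1,2,4)] .
  have drop2: "cyclomatic (del_vert_V V x) (del_vert_E E x) \<le> cyclomatic V E - 2"
    if c: "E x c" "E x d" "c \<noteq> d" "?f c = ?f d" "d \<notin> {a, b}" for c d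
  proof -
    have "?f ` {b, d} \<subseteq> ?f ` ({y. E x y} - {b, d})"
      using fab c ab by (cases "c = b") auto
    moreover have "card {b, d} = 2" using c(5) by (auto simp: card_insert_if)
    ultimately show ?thesis
      using cyclomatic_del_vert_merged_nbrs[OF sg xV, of "{b, d}"] ab(2) c(2) by simp
  qed
  have fab': "?f a' = ?f b'" using conn_rel_del_vert_nbrs_eq[OF sg ab'(1,2,4)] .
  have "b' \<notin> {a, b} \<or> a' \<notin> {a, b}" using ne ab(3) ab'(3) by blast
  then show ?thesis using drop2[OF ab'(1,2,3) fab'] drop2[OF ab'(2,1) _ fab'[symmetric]] ab'(3)
    by blast
qed

section \<open>Cycles\<close>

lemma add_mod_neq_self: "i < m \<Longrightarrow> 0 < t \<Longrightarrow> t < m \<Longrightarrow> (i + t) mod m \<noteq> (i::nat)"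
  by (cases "i + t < m") (auto simp: mod_if)

lemma pred_mod_succ: "i < m \<Longrightarrow> ((i + m - 1) mod m + 1) mod m = (i::nat)"
  by (cases i) (auto simp: mod_if)

lemma succ_mod_eq_imp_pred: "j < m \<Longrightarrow> (j + 1) mod m = i \<Longrightarrow> j = (i + m - 1) mod (m::nat)"
  by (cases "j + 1 < m") (auto simp: mod_if)

definition cycle_nbrs :: "'a list \<Rightarrow> 'a \<Rightarrow> 'a set" where
  "cycle_nbrs cs x = {y. {x, y} \<in> cycle_edges cs}"

lemma cycle_edges_subset_set: "e \<in> cycle_edges cs \<Longrightarrow> e \<subseteq> set cs"
  by (auto simp: cycle_edges_def intro!: nth_mem mod_less_divisor)

lemma cycle_nbrs_subset_set: "y \<in> cycle_nbrs cs x \<Longrightarrow> y \<in> set cs"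
  using cycle_edges_subset_set by (fastforce simp: cycle_nbrs_def)

lemma cycle_succ_in_nbrs:
  "i < length cs \<Longrightarrow> cs ! ((i + 1) mod length cs) \<in> cycle_nbrs cs (cs ! i)"
  by (auto simp: cycle_nbrs_def cycle_edges_def)

lemma is_cycleD:
  assumes "is_cycle V E cs"
  shows "3 \<le> length cs" "distinct cs" "set cs \<subseteq> V"
    "\<And>i. i < length cs \<Longrightarrow> E (cs ! i) (cs ! ((i + 1) mod length cs))"
  using assms by (auto simp: is_cycle_def)

lemma cycle_nbrs_nth:
  assumes cyc: "is_cycle V E cs" and i: "i < length cs"
  defines "m \<equiv> length cs"
  shows "cycle_nbrs cs (cs ! i) = {cs ! ((i + 1) mod m), cs ! ((i + m - 1) mod m)}"
proof
  have m3: "3 \<le> m" using is_cycleD(1)[OF cyc] by (simp add: m_def)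
  have inj: "\<And>p q. p < m \<Longrightarrow> q < m \<Longrightarrow> cs ! p = cs ! q \<longleftrightarrow> p = q"
    using is_cycleD(2)[OF cyc] by (simp add: m_def nth_eq_iff_index_eq)
  have im: "i < m" using i by (simp add: m_def)
  show "cycle_nbrs cs (cs ! i) \<subseteq> {cs ! ((i + 1) mod m), cs ! ((i + m - 1) mod m)}"
  proof
    fix y assume "y \<in> cycle_nbrs cs (cs ! i)"
    then obtain j where j: "j < m" "{cs ! i, y} = {cs ! j, cs ! ((j + 1) mod m)}"
      by (auto simp: cycle_nbrs_def cycle_edges_def m_def)
    have j1: "(j + 1) mod m < m" using m3 by simp
    from j(2) consider "cs ! i = cs ! j" "y = cs ! ((j + 1) mod m)"
      | "cs ! i = cs ! ((j + 1) mod m)" "y = cs ! j"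
      by (auto simp: doubleton_eq_iff)
    then show "y \<in> {cs ! ((i + 1) mod m), cs ! ((i + m - 1) mod m)}"
    proof cases
      case 1
      then show ?thesis using inj[OF im j(1)] by simp
    next
      case 2
      then have "j = (i + m - 1) mod m" using inj[OF im j1] succ_mod_eq_imp_pred[OF j(1)] by simp
      then show ?thesis using 2 by simp
    qed
  qed
  show "{cs ! ((i + 1) mod m), cs ! ((i + m - 1) mod m)} \<subseteq> cycle_nbrs cs (cs ! i)"
  proof -
    let ?p = "(i + m - 1) mod m"
    have "?p < m" using m3 by (intro mod_less_divisor) linarith
    then have "cs ! ((?p + 1) mod m) \<in> cycle_nbrs cs (cs ! ?p)"
      using cycle_succ_in_nbrs[of ?p cs] by (simp add: m_def)
    then have "cs ! ?p \<in> cycle_nbrs cs (cs ! i)"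
      using pred_mod_succ[OF im] by (simp add: cycle_nbrs_def insert_commute)
    then show ?thesis using cycle_succ_in_nbrs[OF i] by (simp add: m_def)
  qed
qed

lemma cycle_path_avoiding_vertex:
  assumes cyc: "is_cycle V E cs" and i: "i < length cs"
  defines "m \<equiv> length cs"
  shows "(del_vert_E E (cs ! i))\<^sup>*\<^sup>* (cs ! ((i + 1) mod m)) (cs ! ((i + m - 1) mod m))"
proof -
  have m3: "3 \<le> m" using is_cycleD(1)[OF cyc] by (simp add: m_def)
  have im: "i < m" using i by (simp add: m_def)
  have not_x: "cs ! ((i + t) mod m) \<noteq> cs ! i" if "0 < t" "t < m" for t
  proof -
    have "(i + t) mod m < m" using m3 by (intro mod_less_divisor) linarith
    then show ?thesis using add_mod_neq_self[OF im that] is_cycleD(2)[OF cyc] im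
      by (simp add: m_def nth_eq_iff_index_eq)
  qed
  have "(del_vert_E E (cs ! i))\<^sup>*\<^sup>* (cs ! ((i + 1) mod m)) (cs ! ((i + 1 + k) mod m))"
    if "k \<le> m - 2" for k
    using that
  proof (induction k)
    case (Suc k)
    let ?j = "(i + 1 + k) mod m"
    have "?j < m" using m3 by (intro mod_less_divisor) linarith
    then have "E (cs ! ?j) (cs ! ((?j + 1) mod m))" using is_cycleD(4)[OF cyc] by (simp add: m_def)
    moreover have "(?j + 1) mod m = (i + 1 + Suc k) mod m" by (simp add: mod_Suc_eq)
    moreover have "cs ! ?j \<noteq> cs ! i" "cs ! ((i + 1 + Suc k) mod m) \<noteq> cs ! i"
      using not_x[of "1 + k"] not_x[of "1 + Suc k"] Suc.prems by (simp_all add: add.assoc)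
    ultimately have "del_vert_E E (cs ! i) (cs ! ?j) (cs ! ((i + 1 + Suc k) mod m))"
      by (simp add: del_vert_E_def)
    moreover have "(del_vert_E E (cs ! i))\<^sup>*\<^sup>* (cs ! ((i + 1) mod m)) (cs ! ?j)"
      using Suc.IH Suc.prems by simp
    ultimately show ?case by (rule rtranclp.rtrancl_into_rtrancl[rotated])
  qed simp
  from this[of "m - 2"] show ?thesis using m3 by (simp add: numeral_2_eq_2 Suc_diff_Suc)
qed

lemma cycle_vertex_nbrs:
  assumes sg: "simple_graph V E" and cyc: "is_cycle V E cs" and x: "x \<in> set cs"
  obtains a b where "cycle_nbrs cs x = {a, b}" "a \<noteq> b" "E x a" "E x b"
    "(del_vert_E E x)\<^sup>*\<^sup>* a b"
proof -
  define m where "m = length cs"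
  obtain i where i: "i < m" "x = cs ! i" using x by (auto simp: in_set_conv_nth m_def)
  have m3: "3 \<le> m" using is_cycleD(1)[OF cyc] by (simp add: m_def)
  let ?a = "cs ! ((i + 1) mod m)" and ?b = "cs ! ((i + m - 1) mod m)"
  have succ: "(i + 1) mod m < m" and pred: "(i + m - 1) mod m < m"
    using m3 by (intro mod_less_divisor, linarith)+
  have Exa: "E x ?a" using is_cycleD(4)[OF cyc] i by (simp add: m_def)
  have "E ?b x"
    using is_cycleD(4)[OF cyc, of "(i + m - 1) mod m"] pred pred_mod_succ[OF i(1)] i
    by (simp add: m_def)
  then have Exb: "E x ?b" by (rule simple_graph_sym[OF sg])
  have ne: "?a \<noteq> ?b"
  proof
    assume "?a = ?b"
    then have "(i + 1) mod m = (i + m - 1) mod m"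
      using is_cycleD(2)[OF cyc] succ pred by (simp add: m_def nth_eq_iff_index_eq)
    then have "((i + 1) mod m + 1) mod m = i" using pred_mod_succ[OF i(1)] by simp
    then have "(i + 2) mod m = i" by (simp add: mod_Suc_eq)
    then show False using add_mod_neq_self[OF i(1), of 2] m3 by simp
  qed
  have nbrs: "cycle_nbrs cs x = {?a, ?b}"
    using cycle_nbrs_nth[OF cyc, of i] i by (simp add: m_def)
  have path: "(del_vert_E E x)\<^sup>*\<^sup>* ?a ?b"
    using cycle_path_avoiding_vertex[OF cyc, of i] i by (simp add: m_def)
  show thesis by (rule that[OF nbrs ne Exa Exb path])
qed

lemma cyclomatic_del_cycle_vertex:
  assumes sg: "simple_graph V E" and cyc: "is_cycle V E cs" and x: "x \<in> set cs"
  shows "cyclomatic (del_vert_V V x) (del_vert_E E x) \<le> cyclomatic V E - 1"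
proof -
  obtain a b where "a \<noteq> b" "E x a" "E x b" "(del_vert_E E x)\<^sup>*\<^sup>* a b"
    using cycle_vertex_nbrs[OF sg cyc x] by metis
  moreover have "x \<in> V" using is_cycleD(3)[OF cyc] x by blast
  ultimately show ?thesis using cyclomatic_del_vert_connected_nbrs[OF sg] by blast
qed

lemma cyclomatic_del_vertex_of_two_cycles:
  assumes sg: "simple_graph V E" and C1: "is_cycle V E C1" and C2: "is_cycle V E C2"
    and x: "x \<in> set C1" "x \<in> set C2" and ne: "cycle_nbrs C1 x \<noteq> cycle_nbrs C2 x"
  shows "cyclomatic (del_vert_V V x) (del_vert_E E x) \<le> cyclomatic V E - 2"
proof -
  obtain a b where ab: "cycle_nbrs C1 x = {a, b}" "a \<noteq> b" "E x a" "E x b"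
    "(del_vert_E E x)\<^sup>*\<^sup>* a b"
    by (rule cycle_vertex_nbrs[OF sg C1 x(1)])
  obtain a' b' where ab': "cycle_nbrs C2 x = {a', b'}" "a' \<noteq> b'" "E x a'" "E x b'"
    "(del_vert_E E x)\<^sup>*\<^sup>* a' b'"
    by (rule cycle_vertex_nbrs[OF sg C2 x(2)])
  have "x \<in> V" using is_cycleD(3)[OF C1] x(1) by blast
  from cyclomatic_del_vert_two_connected_pairs[OF sg this ab(3,4,2,5) ab'(3,4,2,5)]
  show ?thesis using ne ab(1) ab'(1) by simp
qed

text \<open>Walking along C2 from u, each step follows an edge of C2 at a common vertex, hence an edge
  of C1.\<close>
lemma set_subset_if_cycle_nbrs_agree:
  assumes u: "u \<in> set C1" "u \<in> set C2"
    and agree: "\<forall>x\<in>set C1 \<inter> set C2. cycle_nbrs C1 x = cycle_nbrs C2 x"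
  shows "set C2 \<subseteq> set C1"
proof -
  define m where "m = length C2"
  have m0: "0 < m" using u(2) by (cases C2) (auto simp: m_def)
  obtain j where j: "j < m" "C2 ! j = u" using u(2) by (auto simp: in_set_conv_nth m_def)
  have walk: "C2 ! ((j + k) mod m) \<in> set C1" for k
  proof (induction k)
    case 0
    then show ?case using j u(1) by simp
  next
    case (Suc k)
    let ?p = "(j + k) mod m"
    have "?p < m" using m0 by simp
    then have "C2 ! ((?p + 1) mod m) \<in> cycle_nbrs C2 (C2 ! ?p)"
      using cycle_succ_in_nbrs[of ?p C2] by (simp add: m_def)
    moreover have "C2 ! ?p \<in> set C2" using \<open>?p < m\<close> by (simp add: m_def)
    ultimately have "C2 ! ((?p + 1) mod m) \<in> cycle_nbrs C1 (C2 ! ?p)" using agree Suc.IH by auto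
    then show ?case by (simp add: cycle_nbrs_subset_set mod_Suc_eq)
  qed
  show ?thesis
  proof
    fix y assume "y \<in> set C2"
    then obtain i where i: "i < m" "C2 ! i = y" by (auto simp: in_set_conv_nth m_def)
    then have "(j + (i + m - j)) mod m = i" using j by simp
    then show "y \<in> set C1" using walk[of "i + m - j"] i by simp
  qed
qed

lemma cycle_edges_subset_if_cycle_nbrs_agree:
  assumes u: "u \<in> set C1" "u \<in> set C2"
    and agree: "\<forall>x\<in>set C1 \<inter> set C2. cycle_nbrs C1 x = cycle_nbrs C2 x"
  shows "cycle_edges C2 \<subseteq> cycle_edges C1"
proof
  fix e assume "e \<in> cycle_edges C2"
  then obtain k where k: "k < length C2" "e = {C2 ! k, C2 ! ((k + 1) mod length C2)}"
    by (auto simp: cycle_edges_def)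
  have "C2 ! k \<in> set C1" using set_subset_if_cycle_nbrs_agree[OF assms] k(1) by auto
  moreover have "C2 ! ((k + 1) mod length C2) \<in> cycle_nbrs C2 (C2 ! k)"
    using cycle_succ_in_nbrs[OF k(1)] .
  ultimately have "C2 ! ((k + 1) mod length C2) \<in> cycle_nbrs C1 (C2 ! k)"
    using agree k(1) by auto
  then show "e \<in> cycle_edges C1" using k(2) by (simp add: cycle_nbrs_def)
qed

lemma cycle_nbrs_differ:
  assumes "u \<in> set C1" "u \<in> set C2" "cycle_edges C1 \<noteq> cycle_edges C2"
  shows "\<exists>x\<in>set C1 \<inter> set C2. cycle_nbrs C1 x \<noteq> cycle_nbrs C2 x"
proof (rule ccontr)
  assume "\<not> ?thesis"
  then have "\<forall>x\<in>set C1 \<inter> set C2. cycle_nbrs C1 x = cycle_nbrs C2 x"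
    "\<forall>x\<in>set C2 \<inter> set C1. cycle_nbrs C2 x = cycle_nbrs C1 x" by auto
  then show False
    using cycle_edges_subset_if_cycle_nbrs_agree[of u C1 C2] cycle_edges_subset_if_cycle_nbrs_agree[of u C2 C1]
      assms by blast
qed

definition is_path :: "'a set \<Rightarrow> ('a \<Rightarrow> 'a \<Rightarrow> bool) \<Rightarrow> 'a list \<Rightarrow> bool" where
  "is_path V E xs \<longleftrightarrow> distinct xs \<and> set xs \<subseteq> V \<and>
     (\<forall>i. Suc i < length xs \<longrightarrow> E (xs ! i) (xs ! Suc i))"

lemma longest_path_exists:
  assumes finV: "finite V" and ys: "is_path V E ys"
  shows "\<exists>xs. is_path V E xs \<and> (\<forall>zs. is_path V E zs \<longrightarrow> length zs \<le> length xs)"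
proof -
  let ?L = "length ` {xs. is_path V E xs}"
  have "length zs \<le> card V" if "is_path V E zs" for zs
  proof -
    have "length zs = card (set zs)" using that by (simp add: is_path_def distinct_card)
    also have "\<dots> \<le> card V" using that card_mono[OF finV] by (simp add: is_path_def)
    finally show ?thesis .
  qed
  then have "?L \<subseteq> {..card V}" by auto
  then have "finite ?L" by (rule finite_subset) simp
  moreover have "?L \<noteq> {}" using ys by blast
  ultimately have "Max ?L \<in> ?L" by (rule Max_in)
  then obtain xs where xs: "is_path V E xs" "length xs = Max ?L" by auto
  have "length zs \<le> length xs" if "is_path V E zs" for zs
  proof -
    have "length zs \<in> ?L" using that by blast
    then show ?thesis using Max_ge[OF \<open>finite ?L\<close>] xs(2) by simp
  qed
  then show ?thesis using xs(1) by blast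
qed

lemma is_cycle_take_path:
  assumes xs: "is_path V E xs" and j: "2 \<le> j" "j < length xs" and closing: "E (xs ! j) (xs ! 0)"
  shows "is_cycle V E (take (Suc j) xs)"
  unfolding is_cycle_def
proof (intro conjI allI impI)
  let ?cs = "take (Suc j) xs"
  have len: "length ?cs = Suc j" using j by simp
  show "3 \<le> length ?cs" "distinct ?cs" "set ?cs \<subseteq> V"
    using len j xs set_take_subset[of "Suc j" xs] by (auto simp: is_path_def)
  fix i assume "i < length ?cs"
  then consider "i < j" | "i = j" using len by linarith
  then show "E (?cs ! i) (?cs ! ((i + 1) mod length ?cs))"
  proof cases
    case 1
    then show ?thesis using xs j by (simp add: is_path_def len)
  next
    case 2
    have "?cs ! i = xs ! j" "?cs ! 0 = xs ! 0" using 2 by simp_all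
    moreover have "(i + 1) mod length ?cs = 0" unfolding len using 2 by simp
    ultimately show ?thesis using closing by (simp only:)
  qed
qed

text \<open>The first vertex of a longest path is a pendant vertex: a further neighbour would either
  extend the path or close a cycle.\<close>
lemma pendant_vertex_exists:
  assumes sg: "simple_graph V E" and Eab: "E a b" and acyclic: "\<And>x. \<not> on_cycle V E x"
  obtains v w where "{y. E v y} = {w}"
proof -
  have ab: "is_path V E [a, b]"
    using simple_graph_vertices[OF sg Eab] simple_graph_irrefl[OF sg Eab] Eab
    by (auto simp: is_path_def less_Suc_eq)
  from longest_path_exists[OF simple_graph_finite[OF sg] ab] obtain xs
    where xs: "is_path V E xs" and longest: "\<forall>zs. is_path V E zs \<longrightarrow> length zs \<le> length xs"
    by blast
  have len: "2 \<le> length xs" using longest[rule_format, OF ab] by simp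
  let ?p = "xs ! 0" and ?q = "xs ! Suc 0"
  have Epq: "E ?p ?q" using xs len unfolding is_path_def by auto
  have "y = ?q" if Epy: "E ?p y" for y
  proof (rule ccontr)
    assume "y \<noteq> ?q"
    show False
    proof (cases "y \<in> set xs")
      case False
      have "is_path V E (y # xs)"
        unfolding is_path_def
      proof (intro conjI allI impI)
        show "distinct (y # xs)" "set (y # xs) \<subseteq> V"
          using xs False simple_graph_vertices[OF sg Epy] by (auto simp: is_path_def)
        fix i assume "Suc i < length (y # xs)"
        then show "E ((y # xs) ! i) ((y # xs) ! Suc i)"
          using xs simple_graph_sym[OF sg Epy] by (cases i) (auto simp: is_path_def)
      qed
      then show False using longest[rule_format, of "y # xs"] by simp
    next
      case True
      then obtain j where j: "j < length xs" "xs ! j = y" by (auto simp: in_set_conv_nth)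
      have "j \<noteq> 0" using j simple_graph_irrefl[OF sg Epy] by (cases "j = 0") auto
      moreover have "j \<noteq> Suc 0" using j \<open>y \<noteq> ?q\<close> by auto
      ultimately have "is_cycle V E (take (Suc j) xs)"
        using is_cycle_take_path[OF xs _ j(1)] simple_graph_sym[OF sg Epy] j(2) by simp
      moreover have "take (Suc j) xs ! 0 \<in> set (take (Suc j) xs)" using j(1) by (intro nth_mem) simp
      then have "?p \<in> set (take (Suc j) xs)" by (simp only: nth_take zero_less_Suc)
      ultimately have "on_cycle V E ?p" unfolding on_cycle_def by blast
      then show False using acyclic by blast
    qed
  qed
  then have "{y. E ?p y} = {?q}" using Epq by blast
  then show thesis by (rule that)
qed

section \<open>Independence number\<close>

lemma finite_independent_cards:
  assumes "finite V"
  shows "finite {card S | S. independent V E S}"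
proof (rule finite_subset)
  show "{card S | S. independent V E S} \<subseteq> {..card V}"
    using card_mono[OF assms] by (auto simp: independent_def)
qed simp

lemma card_le_independence_number:
  assumes "finite V" "independent V E S"
  shows "card S \<le> independence_number V E"
  unfolding independence_number_def using finite_independent_cards[OF assms(1)] assms(2)
  by (auto intro: Max_ge)

lemma independence_number_witness:
  assumes "finite V"
  obtains S where "independent V E S" "card S = independence_number V E"
proof -
  have "independent V E {}" by (simp add: independent_def)
  then have "independence_number V E \<in> {card S | S. independent V E S}"
    unfolding independence_number_def using finite_independent_cards[OF assms]
    by (intro Max_in) auto
  then obtain S where "independent V E S" "independence_number V E = card S" by auto
  then show thesis using that by simp
qed

lemma independence_number_le_card:
  assumes "finite V"
  shows "independence_number V E \<le> card V"
proof -
  obtain S where S: "independent V E S" "card S = independence_number V E"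
    using independence_number_witness[OF assms] .
  have "card S \<le> card V" using card_mono[OF assms] S(1) by (simp add: independent_def)
  then show ?thesis using S(2) by simp
qed

lemma independent_del_vert:
  "independent (del_vert_V V x) (del_vert_E E x) S \<Longrightarrow> independent V E S"
  by (auto simp: independent_def del_vert_V_def del_vert_E_def)

lemma independent_insert:
  assumes sg: "simple_graph V E" and S: "independent V E S" and v: "v \<in> V" "\<forall>y\<in>S. \<not> E v y"
  shows "independent V E (insert v S)"
  using assms by (auto simp: independent_def dest: simple_graph_sym[OF sg] simple_graph_irrefl[OF sg])

lemma independence_number_del_vert_le:
  assumes "finite V"
  shows "independence_number (del_vert_V V x) (del_vert_E E x) \<le> independence_number V E"
proof -
  obtain S where S: "independent (del_vert_V V x) (del_vert_E E x) S"
    "card S = independence_number (del_vert_V V x) (del_vert_E E x)"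
    using independence_number_witness[of "del_vert_V V x"] assms by (auto simp: del_vert_V_def)
  then show ?thesis using card_le_independence_number[OF assms independent_del_vert[OF S(1)]] by simp
qed

lemma independence_number_del_isolated:
  assumes sg: "simple_graph V E" and x: "x \<in> V" "\<And>y. \<not> E x y"
  shows "independence_number (del_vert_V V x) (del_vert_E E x) + 1 \<le> independence_number V E"
proof -
  have finV: "finite V" using sg by (rule simple_graph_finite)
  obtain S where S: "independent (del_vert_V V x) (del_vert_E E x) S"
    "card S = independence_number (del_vert_V V x) (del_vert_E E x)"
    using independence_number_witness[of "del_vert_V V x"] finV by (auto simp: del_vert_V_def)
  have "S \<subseteq> V - {x}" using S(1) by (simp add: independent_def del_vert_V_def)
  then have "x \<notin> S" "finite S" using finite_subset[OF _ finV] by auto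
  moreover have "independent V E (insert x S)"
    using independent_insert[OF sg independent_del_vert[OF S(1)]] x by blast
  then have "card (insert x S) \<le> independence_number V E" by (rule card_le_independence_number[OF finV])
  ultimately show ?thesis using S(2) by simp
qed

lemma independence_number_del_pendant:
  assumes sg: "simple_graph V E" and nbhd: "{y. E v y} = {w}"
  shows "independence_number (del_vert_V (del_vert_V V w) v) (del_vert_E (del_vert_E E w) v) + 1
    \<le> independence_number V E"
proof -
  let ?V = "del_vert_V (del_vert_V V w) v" and ?E = "del_vert_E (del_vert_E E w) v"
  have finV: "finite V" using sg by (rule simple_graph_finite)
  have Evw: "E v w" using nbhd by auto
  obtain S where S: "independent ?V ?E S" "card S = independence_number ?V ?E"
    using independence_number_witness[of ?V] finV by (auto simp: del_vert_V_def)
  have SV: "S \<subseteq> V - {v, w}" using S(1) by (auto simp: independent_def del_vert_V_def)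
  have "independent V E S" using independent_del_vert[OF independent_del_vert[OF S(1)]] .
  moreover have "\<forall>y\<in>S. \<not> E v y" using nbhd SV by auto
  ultimately have "independent V E (insert v S)"
    using independent_insert[OF sg] simple_graph_vertices[OF sg Evw] by blast
  then have "card (insert v S) \<le> independence_number V E" by (rule card_le_independence_number[OF finV])
  moreover have "v \<notin> S" "finite S" using SV finite_subset[OF _ finV] by auto
  ultimately show ?thesis using S(2) by simp
qed

section \<open>The lower bound and its extremal graphs\<close>

definition rank_bound :: "'a set \<Rightarrow> ('a \<Rightarrow> 'a \<Rightarrow> bool) \<Rightarrow> int" where
  "rank_bound V E = 2 * int (card V) - 2 * cyclomatic V E - 2 * int (independence_number V E)"

lemma rank_bound_empty:
  assumes "simple_graph {} E"
  shows "rank_bound {} E = 0"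
proof -
  have "edge_set E = {}" using simple_graph_vertices[OF assms] by (auto simp: edge_set_def)
  moreover have "independence_number {} E = 0" using independence_number_le_card[of "{}" E] by simp
  ultimately show ?thesis by (simp add: rank_bound_def cyclomatic_def num_components_def)
qed

lemma rank_bound_del_vert:
  assumes "finite V" "x \<in> V"
  shows "rank_bound (del_vert_V V x) (del_vert_E E x) + 2
    = rank_bound V E + 2 * cyclomatic V E - 2 * cyclomatic (del_vert_V V x) (del_vert_E E x)
      + 2 * int (independence_number V E)
      - 2 * int (independence_number (del_vert_V V x) (del_vert_E E x))"
  using card_del_vert_V[OF assms] by (simp add: rank_bound_def)

lemma rank_bound_le_del_cycle_vertex:
  assumes sg: "simple_graph V E" and cyc: "is_cycle V E cs" and x: "x \<in> set cs"
  shows "rank_bound V E \<le> rank_bound (del_vert_V V x) (del_vert_E E x)"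
proof -
  have finV: "finite V" using sg by (rule simple_graph_finite)
  have xV: "x \<in> V" using is_cycleD(3)[OF cyc] x by blast
  have "int (independence_number (del_vert_V V x) (del_vert_E E x)) \<le> int (independence_number V E)"
    using independence_number_del_vert_le[OF finV] by simp
  then show ?thesis
    using rank_bound_del_vert[OF finV xV, of E] cyclomatic_del_cycle_vertex[OF sg cyc x] by linarith
qed

lemma rank_bound_le_del_isolated:
  assumes sg: "simple_graph V E" and x: "x \<in> V" "\<And>y. \<not> E x y"
  shows "rank_bound V E \<le> rank_bound (del_vert_V V x) (del_vert_E E x)"
proof -
  have finV: "finite V" using sg by (rule simple_graph_finite)
  have "int (independence_number (del_vert_V V x) (del_vert_E E x)) + 1 \<le> int (independence_number V E)"
    using independence_number_del_isolated[OF sg x] by linarith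
  then show ?thesis
    using rank_bound_del_vert[OF finV x(1), of E] cyclomatic_del_vert_mono[OF sg x(1)] by linarith
qed

lemma rank_bound_del_pendant:
  assumes sg: "simple_graph V E" and nbhd: "{y. E v y} = {w}"
  defines "V2 \<equiv> del_vert_V (del_vert_V V w) v" and "E2 \<equiv> del_vert_E (del_vert_E E w) v"
  shows "rank_bound V E + 2 * cyclomatic V E \<le> rank_bound V2 E2 + 2 * cyclomatic V2 E2 + 2"
proof -
  have Evw: "E v w" using nbhd by blast
  have "v \<in> V" "w \<in> V" "v \<noteq> w"
    using simple_graph_vertices[OF sg Evw] simple_graph_irrefl[OF sg Evw] by auto
  then have "int (card V2) = int (card V) - 2"
    unfolding V2_def by (rule card_del_vert_del_vert[OF simple_graph_finite[OF sg]])
  moreover have "int (independence_number V2 E2) + 1 \<le> int (independence_number V E)"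
    using independence_number_del_pendant[OF sg nbhd] by (simp add: V2_def E2_def)
  ultimately show ?thesis unfolding rank_bound_def by linarith
qed

lemma gain_rank_del_vert_le_int:
  fixes V :: "'a::linorder set"
  shows "finite V \<Longrightarrow>
    int (gain_rank (del_vert_V V u) (del_vert_E E u) phi) \<le> int (gain_rank V E phi)"
  using gain_rank_del_vert_le by simp

theorem gain_rank_lower_bound:
  fixes V :: "'a::linorder set"
  assumes "unit_gain_graph V E phi"
  shows "rank_bound V E \<le> int (gain_rank V E phi)"
  using assms
proof (induction "card V" arbitrary: V E rule: less_induct)
  case less
  have G: "unit_gain_graph V E phi" by fact
  have sg: "simple_graph V E" using G by (rule unit_gain_graph_simple)
  have finV: "finite V" using sg by (rule simple_graph_finite)
  have IH: "rank_bound V' E' \<le> int (gain_rank V' E' phi)"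
    if "card V' < card V" "unit_gain_graph V' E' phi" for V' E'
    using less.hyps that by blast
  have IH_del: "rank_bound (del_vert_V V x) (del_vert_E E x) \<le> int (gain_rank V E phi)"
    if "x \<in> V" for x
  proof -
    have "card (del_vert_V V x) < card V" using card_del_vert_V[OF finV that] by linarith
    then have "rank_bound (del_vert_V V x) (del_vert_E E x)
        \<le> int (gain_rank (del_vert_V V x) (del_vert_E E x) phi)"
      using IH unit_gain_graph_del_vert[OF G] by blast
    then show ?thesis using gain_rank_del_vert_le_int[OF finV, of x E phi] by linarith
  qed
  consider "V = {}"
    | x cs where "is_cycle V E cs" "x \<in> set cs"
    | a b where "E a b" "\<And>x. \<not> on_cycle V E x"
    | x where "x \<in> V" "\<And>y. \<not> E x y"
    unfolding on_cycle_def by blast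
  then show ?case
  proof cases
    case 1
    then have "rank_bound V E = 0" using rank_bound_empty sg by blast
    then show ?thesis by simp
  next
    case (2 x cs)
    have "x \<in> V" using is_cycleD(3)[OF 2(1)] 2(2) by blast
    then show ?thesis using IH_del rank_bound_le_del_cycle_vertex[OF sg 2] by fastforce
  next
    case (3 a b)
    obtain v w where nbhd: "{y. E v y} = {w}" by (rule pendant_vertex_exists[OF sg 3])
    let ?V1 = "del_vert_V V w" and ?E1 = "del_vert_E E w"
    let ?V2 = "del_vert_V ?V1 v" and ?E2 = "del_vert_E ?E1 v"
    have Evw: "E v w" using nbhd by blast
    have vw: "v \<in> V" "w \<in> V" "v \<noteq> w"
      using simple_graph_vertices[OF sg Evw] simple_graph_irrefl[OF sg Evw] by auto
    then have v1: "v \<in> ?V1" by (simp add: del_vert_V_def)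
    have "card ?V2 < card V" using card_del_vert_del_vert[OF finV vw] by linarith
    then have "rank_bound ?V2 ?E2 \<le> int (gain_rank ?V2 ?E2 phi)"
      using IH unit_gain_graph_del_vert[OF unit_gain_graph_del_vert[OF G]] by blast
    moreover have "int (gain_rank ?V2 ?E2 phi) + 2 \<le> int (gain_rank V E phi)"
      using gain_rank_del_pendant[OF G nbhd] by linarith
    moreover have "cyclomatic ?V2 ?E2 \<le> cyclomatic V E"
      using cyclomatic_del_vert_mono[OF simple_graph_del_vert[OF sg] v1]
        cyclomatic_del_vert_mono[OF sg vw(2)] by linarith
    ultimately show ?thesis using rank_bound_del_pendant[OF sg nbhd] by linarith
  next
    case (4 x)
    show ?thesis using IH_del[OF 4(1)] rank_bound_le_del_isolated[OF sg 4] by linarith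
  qed
qed

lemma extremal_del_cycle_vertex:
  fixes V :: "'a::linorder set"
  assumes G: "unit_gain_graph V E phi" and ext: "int (gain_rank V E phi) = rank_bound V E"
    and cyc: "is_cycle V E cs" and u: "u \<in> set cs"
  shows "gain_rank (del_vert_V V u) (del_vert_E E u) phi = gain_rank V E phi"
    and "int (gain_rank (del_vert_V V u) (del_vert_E E u) phi)
      = rank_bound (del_vert_V V u) (del_vert_E E u)"
    and "cyclomatic V E = cyclomatic (del_vert_V V u) (del_vert_E E u) + 1"
    and "independence_number (del_vert_V V u) (del_vert_E E u) = independence_number V E"
proof -
  have sg: "simple_graph V E" using G by (rule unit_gain_graph_simple)
  have finV: "finite V" using sg by (rule simple_graph_finite)
  have uV: "u \<in> V" using is_cycleD(3)[OF cyc] u by blast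
  have "int (independence_number (del_vert_V V u) (del_vert_E E u)) \<le> int (independence_number V E)"
    using independence_number_del_vert_le[OF finV] by simp
  note bounds = this gain_rank_lower_bound[OF unit_gain_graph_del_vert[OF G, of u]]
    gain_rank_del_vert_le_int[OF finV, of u E phi] cyclomatic_del_cycle_vertex[OF sg cyc u]
    rank_bound_del_vert[OF finV uV, of E]
  show "int (gain_rank (del_vert_V V u) (del_vert_E E u) phi)
      = rank_bound (del_vert_V V u) (del_vert_E E u)"
    and "cyclomatic V E = cyclomatic (del_vert_V V u) (del_vert_E E u) + 1"
    using bounds ext by linarith+
  have "int (independence_number (del_vert_V V u) (del_vert_E E u)) = int (independence_number V E)"
    and "int (gain_rank (del_vert_V V u) (del_vert_E E u) phi) = int (gain_rank V E phi)"
    using bounds ext by linarith+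
  then show "independence_number (del_vert_V V u) (del_vert_E E u) = independence_number V E"
    and "gain_rank (del_vert_V V u) (del_vert_E E u) phi = gain_rank V E phi"
    by simp_all
qed

text \<open>A vertex on two cycles with different neighbours would drop the cyclomatic number by two
  on deletion, pushing the lower bound for G - x above the rank of G.\<close>
lemma extremal_cycle_edges_unique:
  fixes V :: "'a::linorder set"
  assumes G: "unit_gain_graph V E phi" and ext: "int (gain_rank V E phi) = rank_bound V E"
    and cyc: "is_cycle V E cs" "u \<in> set cs" and cyc': "is_cycle V E cs'" "u \<in> set cs'"
  shows "cycle_edges cs' = cycle_edges cs"
proof (rule ccontr)
  have sg: "simple_graph V E" using G by (rule unit_gain_graph_simple)
  have finV: "finite V" using sg by (rule simple_graph_finite)
  assume "cycle_edges cs' \<noteq> cycle_edges cs"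
  then obtain x where x: "x \<in> set cs'" "x \<in> set cs" "cycle_nbrs cs' x \<noteq> cycle_nbrs cs x"
    using cycle_nbrs_differ[OF cyc'(2) cyc(2)] by blast
  have xV: "x \<in> V" using is_cycleD(3)[OF cyc(1)] x(2) by blast
  have "int (independence_number (del_vert_V V x) (del_vert_E E x)) \<le> int (independence_number V E)"
    using independence_number_del_vert_le[OF finV] by simp
  then show False
    using gain_rank_lower_bound[OF unit_gain_graph_del_vert[OF G, of x]]
      gain_rank_del_vert_le_int[OF finV, of x E phi]
      cyclomatic_del_vertex_of_two_cycles[OF sg cyc'(1) cyc(1) x]
      rank_bound_del_vert[OF finV xV, of E] ext
    by linarith
qed

lemma extremal_card_cycles_through:
  fixes V :: "'a::linorder set"
  assumes G: "unit_gain_graph V E phi" and ext: "int (gain_rank V E phi) = rank_bound V E"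
    and cyc: "is_cycle V E cs" "u \<in> set cs"
  shows "card (cycles_through V E u) = 1"
proof -
  have "cycles_through V E u = {cycle_edges cs}"
    unfolding cycles_through_def
  proof (intro equalityI subsetI)
    fix e assume "e \<in> {cycle_edges cs' |cs'. is_cycle V E cs' \<and> u \<in> set cs'}"
    then show "e \<in> {cycle_edges cs}" using extremal_cycle_edges_unique[OF G ext cyc] by blast
  qed (use cyc in blast)
  then show ?thesis by simp
qed

text \<open>Deleting u and a pendant neighbour y lowers the rank by two, but not the bound
  2n - 2c - 2\<alpha>: n falls by two, c by at least one (u lies on a cycle) and \<alpha> by at least one
  (y extends every independent set avoiding u).\<close>
lemma extremal_cycle_vertex_not_quasi_pendant:
  fixes V :: "'a::linorder set"
  assumes G: "unit_gain_graph V E phi" and ext: "int (gain_rank V E phi) = rank_bound V E"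
    and cyc: "is_cycle V E cs" and u: "u \<in> set cs"
  shows "\<not> quasi_pendant E u"
proof
  have sg: "simple_graph V E" using G by (rule unit_gain_graph_simple)
  assume "quasi_pendant E u"
  then obtain y w where Euy: "E u y" and nbhd_w: "{z. E y z} = {w}"
    by (auto simp: quasi_pendant_def pendant_iff_singleton_neighbours)
  have "u \<in> {z. E y z}" using simple_graph_sym[OF sg Euy] by simp
  then have nbhd: "{z. E y z} = {u}" using nbhd_w by simp
  let ?V1 = "del_vert_V V u" and ?E1 = "del_vert_E E u"
  let ?V2 = "del_vert_V ?V1 y" and ?E2 = "del_vert_E ?E1 y"
  have sg1: "simple_graph ?V1 ?E1" using sg by (rule simple_graph_del_vert)
  have y1: "y \<in> ?V1"
    using simple_graph_vertices[OF sg Euy] simple_graph_irrefl[OF sg Euy]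
    by (auto simp: del_vert_V_def)
  have "rank_bound V E \<le> rank_bound ?V2 ?E2"
    using rank_bound_del_pendant[OF sg nbhd] cyclomatic_del_vert_mono[OF sg1 y1]
      cyclomatic_del_cycle_vertex[OF sg cyc u] by linarith
  moreover have "int (gain_rank ?V2 ?E2 phi) + 2 \<le> int (gain_rank V E phi)"
    using gain_rank_del_pendant[OF G nbhd] by linarith
  ultimately show False
    using gain_rank_lower_bound[OF unit_gain_graph_del_vert[OF unit_gain_graph_del_vert[OF G, of u], of y]]
      ext by linarith
qed

theorem lemma4p4:
  fixes V :: "'a::linorder set" and E :: "'a \<Rightarrow> 'a \<Rightarrow> bool"
    and phi :: "'a \<Rightarrow> 'a \<Rightarrow> complex" and u :: 'a
  assumes "unit_gain_graph V E phi"
    and "int (gain_rank V E phi) =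
           2 * int (card V) - 2 * cyclomatic V E - 2 * int (independence_number V E)"
    and "on_cycle V E u"
  shows "gain_rank V E phi = gain_rank (del_vert_V V u) (del_vert_E E u) phi
    \<and> int (gain_rank (del_vert_V V u) (del_vert_E E u) phi) =
           2 * (int (card V) - 1) - 2 * cyclomatic (del_vert_V V u) (del_vert_E E u)
             - 2 * int (independence_number (del_vert_V V u) (del_vert_E E u))
    \<and> cyclomatic V E = cyclomatic (del_vert_V V u) (del_vert_E E u) + 1
    \<and> independence_number V E = independence_number (del_vert_V V u) (del_vert_E E u)
    \<and> card (cycles_through V E u) = 1 \<and> \<not> quasi_pendant E u"
proof -
  obtain cs where cyc: "is_cycle V E cs" and u: "u \<in> set cs"
    using assms(3) by (auto simp: on_cycle_def)
  have ext: "int (gain_rank V E phi) = rank_bound V E"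
    using assms(2) by (simp add: rank_bound_def)
  have "u \<in> V" using is_cycleD(3)[OF cyc] u by blast
  with simple_graph_finite[OF unit_gain_graph_simple[OF assms(1)]]
  have card: "int (card (del_vert_V V u)) = int (card V) - 1" by (rule card_del_vert_V)
  note del = extremal_del_cycle_vertex[OF assms(1) ext cyc u]
  show ?thesis
  proof (intro conjI)
    show "int (gain_rank (del_vert_V V u) (del_vert_E E u) phi) =
        2 * (int (card V) - 1) - 2 * cyclomatic (del_vert_V V u) (del_vert_E E u)
          - 2 * int (independence_number (del_vert_V V u) (del_vert_E E u))"
      using del(2) card by (simp add: rank_bound_def)
    show "card (cycles_through V E u) = 1"
      by (rule extremal_card_cycles_through[OF assms(1) ext cyc u])
    show "\<not> quasi_pendant E u"
      by (rule extremal_cycle_vertex_not_quasi_pendant[OF assms(1) ext cyc u])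
  qed (use del in simp_all)
qed

end
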